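(* Consider the asynchronous multi-channel network model described in the context, running Algorithm 1 with frame length $L$, and assume the maximum clock drift rate satisfies $\delta \le \frac{1}{7}$. Then for every frame $f$ of any node and every other node $u$, the number of frames of $u$ that overlap $f$ in real time is at most $3$.
   Context: Each node $u$ has a clock $C_u$ (a function of real time) such that for all real times $t$ and all $\Delta t \ge 0$, $(1-\delta)\Delta t \le C_u(t+\Delta t) - C_u(t) \le (1+\delta)\Delta t$, where $0 \le \delta < 1$ is the maximum drift rate; clocks of different nodes may have arbitrary offsets. In Algorithm 1, each node, from the moment it starts (at an arbitrary real time), partitions its local time into consecutive frames each of length $L$ as measured by its own clock (the $k$-th frame occupies the real-time interval during which its clock reads values in $[C^{0}+(k-1)L,\, C^{0}+kL)$, where $C^0$ is its clock value at start), and each frame into three consecutive slots of local length $L/3$. Frames are regarded as real-time intervals; two frames overlap if these intervals intersect. *)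

theory Defs
  imports Main "HOL.Real"
begin

text \<open>Clock of node u: C u :: real \<Rightarrow> real (local time as a function of real time).
  Node u starts at real time s u.\<close>

definition frame :: "('n \<Rightarrow> real \<Rightarrow> real) \<Rightarrow> ('n \<Rightarrow> real) \<Rightarrow> real \<Rightarrow> 'n \<Rightarrow> nat \<Rightarrow> real set" where
  "frame C s L u k =
     {t. s u \<le> t \<and> C u (s u) + (real k - 1) * L \<le> C u t \<and> C u t < C u (s u) + real k * L}"

definition drift_bounded :: "('n \<Rightarrow> real \<Rightarrow> real) \<Rightarrow> real \<Rightarrow> bool" where
  "drift_bounded C \<delta> \<longleftrightarrow>
     (\<forall>u t dt. dt \<ge> 0 \<longrightarrow>
        (1 - \<delta>) * dt \<le> C u (t + dt) - C u t \<and> C u (t + dt) - C u t \<le> (1 + \<delta>) * dt)"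

end

theory Submission
  imports Defs
begin

text \<open>If frames \<open>k\<close> and \<open>k'\<close> of \<open>u\<close> both meet frame \<open>j\<close> of \<open>v\<close>, pick real times \<open>t\<close>, \<open>t'\<close> in
  the two intersections. When \<open>k' \<ge> k + 3\<close>, the clock of \<open>u\<close> advances by more than \<open>2L\<close> from
  \<open>t\<close> to \<open>t'\<close>, which takes real time more than \<open>2L / (1 + \<delta>)\<close>; in that time the clock of \<open>v\<close>
  advances by more than \<open>2L (1 - \<delta>) / (1 + \<delta>) \<ge> L\<close>, impossible inside one frame of \<open>v\<close>.
  So the indices of the frames of \<open>u\<close> meeting a frame of \<open>v\<close> span at most three consecutive
  numbers. This needs only \<open>\<delta> \<le> 1/3\<close>.\<close>

lemma drift_bounded_lower:
  assumes "drift_bounded C \<delta>" and "t \<le> t'"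
  shows "(1 - \<delta>) * (t' - t) \<le> C u t' - C u t"
  using assms unfolding drift_bounded_def
  by (metis add.commute diff_add_cancel diff_ge_0_iff_ge)

lemma drift_bounded_upper:
  assumes "drift_bounded C \<delta>" and "t \<le> t'"
  shows "C u t' - C u t \<le> (1 + \<delta>) * (t' - t)"
  using assms unfolding drift_bounded_def
  by (metis add.commute diff_add_cancel diff_ge_0_iff_ge)

lemma frame_clock_bounds:
  assumes "t \<in> frame C s L u k"
  shows "C u (s u) + (real k - 1) * L \<le> C u t" and "C u t < C u (s u) + real k * L"
  using assms by (simp_all add: frame_def)

lemma frame_index_le_if_meet_same_frame:
  assumes L: "L > 0" and \<delta>: "\<delta> \<le> 1/3" and drift: "drift_bounded C \<delta>"
    and t: "t \<in> frame C s L u k" "t \<in> frame C s L v j"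
    and t': "t' \<in> frame C s L u k'" "t' \<in> frame C s L v j"
  shows "k' \<le> k + 2"
proof (rule ccontr)
  assume "\<not> k' \<le> k + 2"
  then have "(real k + 2) * L \<le> (real k' - 1) * L"
    using L by (intro mult_right_mono) auto
  then have u_advance: "C u t' - C u t > 2 * L"
    using frame_clock_bounds(1)[OF t'(1)] frame_clock_bounds(2)[OF t(1)]
    by (simp add: algebra_simps)
  have v_advance: "C v t' - C v t < L"
    using frame_clock_bounds[OF t(2)] frame_clock_bounds[OF t'(2)]
    by (simp add: algebra_simps)
  have "t < t'"
  proof (rule ccontr)
    assume "\<not> t < t'"
    then have "(1 - \<delta>) * (t - t') \<le> C u t - C u t'"
      by (intro drift_bounded_lower[OF drift]) simp
    moreover have "0 \<le> (1 - \<delta>) * (t - t')"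
      using \<delta> \<open>\<not> t < t'\<close> by simp
    ultimately show False
      using u_advance L by simp
  qed
  then have "2 * L < (1 + \<delta>) * (t' - t)" and "(1 - \<delta>) * (t' - t) < L"
    using u_advance v_advance drift_bounded_upper[OF drift] drift_bounded_lower[OF drift]
    by (meson less_imp_le less_le_trans le_less_trans)+
  then have "(1 - 3 * \<delta>) * (t' - t) < 0"
    by (simp add: algebra_simps)
  moreover have "0 \<le> (1 - 3 * \<delta>) * (t' - t)"
    using \<delta> \<open>t < t'\<close> by simp
  ultimately show False
    by simp
qed

lemma finite_card_le_if_spread_le:
  fixes S :: "nat set"
  assumes spread: "\<And>k k'. k \<in> S \<Longrightarrow> k' \<in> S \<Longrightarrow> k' \<le> k + d"
  shows "finite S \<and> card S \<le> Suc d"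
proof (cases "S = {}")
  case False
  define m where "m = (LEAST k. k \<in> S)"
  have "m \<in> S"
    using False unfolding m_def by (metis LeastI equals0I)
  have S_sub: "S \<subseteq> {m..m + d}"
    using spread[OF \<open>m \<in> S\<close>] by (auto simp: m_def Least_le)
  then have "finite S"
    by (rule finite_subset) simp
  moreover have "card S \<le> Suc d"
    using card_mono[OF _ S_sub] by simp
  ultimately show ?thesis ..
qed simp

theorem mainTheorem1:
  fixes C :: "'n \<Rightarrow> real \<Rightarrow> real" and s :: "'n \<Rightarrow> real"
    and L \<delta> :: real and v u :: 'n and j :: nat
  assumes "L > 0"
    and "0 \<le> \<delta>" and "\<delta> < 1" and "\<delta> \<le> 1/7"
    and "drift_bounded C \<delta>"
    and "j \<ge> 1"
    and "u \<noteq> v"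
  shows "finite {k. k \<ge> 1 \<and> frame C s L u k \<inter> frame C s L v j \<noteq> {}}
       \<and> card {k. k \<ge> 1 \<and> frame C s L u k \<inter> frame C s L v j \<noteq> {}} \<le> 3"
proof -
  define S where "S = {k. k \<ge> 1 \<and> frame C s L u k \<inter> frame C s L v j \<noteq> {}}"
  have "\<delta> \<le> 1/3"
    using \<open>\<delta> \<le> 1/7\<close> by simp
  have "k' \<le> k + 2" if "k \<in> S" and "k' \<in> S" for k k'
    using that frame_index_le_if_meet_same_frame[OF \<open>L > 0\<close> \<open>\<delta> \<le> 1/3\<close> \<open>drift_bounded C \<delta>\<close>]
    unfolding S_def by blast
  then have "finite S \<and> card S \<le> Suc 2"
    by (rule finite_card_le_if_spread_le)
  then show ?thesis
    unfolding S_def by simp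
qed

end
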